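(* Let $d$ be a positive integer and let $A$ be a $d \times n_1$ real matrix whose columns form a spherical 2-design of size $n_1$ on $S^{d-1}$. Let $J$ be the $1 \times n_1$ matrix of all 1's, $\alpha = \sqrt{d/(d+1)}$ and $\delta = \sqrt{1/(d+1)}$. Then the $2n_1$ columns of the $(d+1)\times 2n_1$ matrix $M = \begin{pmatrix} \alpha A & -\alpha A \\ \delta J & -\delta J \end{pmatrix}$ form a spherical 3-design of size $2n_1$ on $S^d$.
   Context: $S^k$ denotes the unit sphere in $\mathbb{R}^{k+1}$. A spherical $t$-design on $S^k$ of size $n$ is a finite collection $X$ of $n$ points of $S^k$ (here given as the columns of a matrix) such that the average of every polynomial of degree at most $t$ in $k+1$ variables over $S^k$ (with respect to surface measure) equals $\frac{1}{|X|}\sum_{x\in X} f(x)$. *)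

theory Defs
  imports "HOL-Analysis.Analysis"
begin

definition poly_fun_deg :: "nat \<Rightarrow> (real^'k \<Rightarrow> real) \<Rightarrow> bool" where
  "poly_fun_deg t f \<longleftrightarrow>
     (\<exists>(F :: ('k \<Rightarrow> nat) set) (c :: ('k \<Rightarrow> nat) \<Rightarrow> real).
        finite F \<and> (\<forall>a\<in>F. (\<Sum>i\<in>UNIV. a i) \<le> t) \<and>
        f = (\<lambda>x. \<Sum>a\<in>F. c a * (\<Prod>i\<in>UNIV. (x $ i) ^ a i)))"

text \<open>Average of f over the unit sphere w.r.t. (normalized) surface measure,
  realised as the cone measure: surface measure of E is proportional to the
  Lebesgue measure of the cone {r x | 0 < r <= 1, x in E}; equivalently the
  normalized surface measure is the image of the uniform distribution on the
  unit ball under x \<mapsto> x / |x|.\<close>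
definition sphere_avg :: "(real^'k \<Rightarrow> real) \<Rightarrow> real" where
  "sphere_avg f = integral (ball 0 1) (\<lambda>x. f (x /\<^sub>R norm x)) / measure lebesgue (ball (0::real^'k) 1)"

definition sph_design :: "nat \<Rightarrow> nat \<Rightarrow> (nat \<Rightarrow> real^'k) \<Rightarrow> bool" where
  "sph_design t n X \<longleftrightarrow>
     (\<forall>j<n. norm (X j) = 1) \<and>
     (\<forall>f. poly_fun_deg t f \<longrightarrow> sphere_avg f = (\<Sum>j<n. f (X j)) / real n)"

end

theory Submission
  imports Defs
begin

(* The columns of M come in antipodal pairs, so every monomial of odd degree averages to zero
   over them, as it does over the sphere.  A monomial x_0^c x^b of even degree at most 2, with
   x_0 the new coordinate, averages over M to delta^c alpha^|b| times its average over the
   columns of A, which by the 2-design property is the moment of x^b on S^(d-1).  On the unit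
   sphere of R^n the moments of degree at most 3 are 1 for the constant, 1/n for x_i^2 and 0
   otherwise, by invariance of the surface measure under signed coordinate permutations; with
   alpha^2 = d/(d+1) and delta^2 = 1/(d+1) the moments on S^(d-1) and on S^d then match. *)

section \<open>Signed coordinate permutations preserve Lebesgue measure\<close>

definition signed_perm :: "('n::finite \<Rightarrow> 'n) \<Rightarrow> ('n \<Rightarrow> real) \<Rightarrow> real^'n \<Rightarrow> real^'n" where
  "signed_perm p s x = (\<chi> i. s i * x $ p i)"

lemma prod_Basis_cart: "(\<Prod>b\<in>Basis. f (x \<bullet> b)) = (\<Prod>i\<in>UNIV. f ((x::real^'n) $ i))"
  by (simp add: Basis_vec_def cart_eq_inner_axis axis_eq_axis prod.UNION_disjoint)

lemma emeasure_lborel_box_cart: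
  fixes l u :: "real^'n"
  assumes "\<And>i. l $ i \<le> u $ i"
  shows "emeasure lborel (box l u) = (\<Prod>i\<in>UNIV. u $ i - l $ i)"
proof -
  have "b \<in> Basis \<Longrightarrow> l \<bullet> b \<le> u \<bullet> b" for b
    using assms by (auto simp: Basis_vec_def cart_eq_inner_axis)
  then show ?thesis
    using prod_Basis_cart[of "\<lambda>t. t" "u - l"] by (simp add: emeasure_lborel_box_eq)
qed

lemma signed_perm_borel_measurable [measurable]: "signed_perm p s \<in> borel_measurable borel"
  unfolding signed_perm_def
  by (intro borel_measurable_continuous_onI continuous_on_vec_lambda continuous_intros)

lemma norm_signed_perm:
  assumes "bij p" and "\<And>i. s i \<in> {-1, 1}"
  shows "norm (signed_perm p s x) = norm x"
proof -
  have "(s i * y)^2 = y^2" for i y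
    using assms(2)[of i] by auto
  then have "signed_perm p s x \<bullet> signed_perm p s x = (\<Sum>i\<in>UNIV. (x $ p i)^2)"
    by (simp add: signed_perm_def inner_vec_def flip: power2_eq_square)
  also have "\<dots> = (\<Sum>i\<in>UNIV. (x $ i)^2)"
    using sum.reindex_bij_betw[of p UNIV UNIV "\<lambda>i. (x $ i)^2"] assms(1) by (simp add: bij_def)
  also have "\<dots> = x \<bullet> x"
    by (simp add: inner_vec_def power2_eq_square)
  finally show ?thesis
    by (simp add: norm_eq_sqrt_inner)
qed

lemma signed_perm_scaleR: "signed_perm p s (c *\<^sub>R x) = c *\<^sub>R signed_perm p s x"
  by (simp add: signed_perm_def vec_eq_iff)

lemma distr_lborel_signed_perm:
  fixes p :: "'n::finite \<Rightarrow> 'n"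
  assumes p: "bij p" and s: "\<And>i. s i \<in> {-1, 1}"
  shows "distr lborel borel (signed_perm p s) = lborel"
proof (rule lborel_eqI[symmetric])
  let ?q = "inv p"
  fix l u :: "real^'n"
  assume "\<And>b. b \<in> Basis \<Longrightarrow> l \<bullet> b \<le> u \<bullet> b"
  then have lu: "l $ i \<le> u $ i" for i
    by (auto simp: Basis_vec_def cart_eq_inner_axis)
  \<comment> \<open>Side k of the preimage is side inv p k of box l u, reflected when s (inv p k) = -1.\<close>
  define L :: "real^'n" where "L = (\<chi> k. if s (?q k) = 1 then l $ ?q k else - u $ ?q k)"
  define U :: "real^'n" where "U = (\<chi> k. if s (?q k) = 1 then u $ ?q k else - l $ ?q k)"
  have pq: "p (?q k) = k" and qp: "?q (p k) = k" for k
    using p by (simp_all add: bij_is_surj surj_f_inv_f bij_is_inj)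
  have sign_interval: "a < \<sigma> * y \<and> \<sigma> * y < b \<longleftrightarrow>
      (if \<sigma> = 1 then a < y \<and> y < b else - b < y \<and> y < - a)" if "\<sigma> \<in> {-1, 1}" for \<sigma> y a b :: real
    using that by auto
  have "signed_perm p s -` box l u = box L U"
  proof (rule set_eqI)
    fix x :: "real^'n"
    have "x \<in> signed_perm p s -` box l u \<longleftrightarrow> (\<forall>i. l $ i < s i * x $ p i \<and> s i * x $ p i < u $ i)"
      by (simp add: mem_box_cart signed_perm_def)
    also have "\<dots> \<longleftrightarrow> (\<forall>k. l $ ?q k < s (?q k) * x $ k \<and> s (?q k) * x $ k < u $ ?q k)"
      by (metis pq qp)
    also have "\<dots> \<longleftrightarrow> (\<forall>k. L $ k < x $ k \<and> x $ k < U $ k)"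
      unfolding L_def U_def using s by (auto simp: sign_interval)
    finally show "x \<in> signed_perm p s -` box l u \<longleftrightarrow> x \<in> box L U"
      by (simp add: mem_box_cart)
  qed
  then have "emeasure (distr lborel borel (signed_perm p s)) (box l u) = emeasure lborel (box L U)"
    by (simp add: emeasure_distr)
  also have "\<dots> = ennreal (\<Prod>k\<in>UNIV. U $ k - L $ k)"
    using lu by (intro emeasure_lborel_box_cart) (simp add: L_def U_def)
  also have "(\<Prod>k\<in>UNIV. U $ k - L $ k) = (\<Prod>k\<in>UNIV. u $ ?q k - l $ ?q k)"
    unfolding L_def U_def by (intro prod.cong) auto
  also have "\<dots> = (\<Prod>i\<in>UNIV. u $ i - l $ i)"
    using prod.reindex_bij_betw[of ?q UNIV UNIV "\<lambda>i. u $ i - l $ i"] p by (simp add: bij_betw_inv_into)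
  finally show "emeasure (distr lborel borel (signed_perm p s)) (box l u) = (\<Prod>b\<in>Basis. (u - l) \<bullet> b)"
    by (simp add: prod_Basis_cart[of "\<lambda>t. t"])
qed simp

lemma lborel_integral_signed_perm:
  fixes F :: "real^'n::finite \<Rightarrow> real"
  assumes "bij p" and "\<And>i. s i \<in> {-1, 1}" and "F \<in> borel_measurable borel"
  shows "(\<integral>x. F (signed_perm p s x) \<partial>lborel) = (\<integral>x. F x \<partial>lborel)"
  using integral_distr[of "signed_perm p s" lborel borel F] assms
  by (simp add: distr_lborel_signed_perm)

section \<open>Averages over the sphere\<close>

lemma set_integral_bounded_eq_integral:
  fixes G :: "'a::euclidean_space \<Rightarrow> real"
  assumes "S \<in> sets borel" and "bounded S" and "G \<in> borel_measurable borel"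
    and "\<And>x. x \<in> S \<Longrightarrow> \<bar>G x\<bar> \<le> B"
  shows "G integrable_on S" and "integral S G = (LINT x:S|lborel. G x)"
proof -
  have "emeasure lborel S < \<infinity>"
    using assms(2) by (rule emeasure_bounded_finite)
  then have "set_integrable lborel S G"
    unfolding set_integrable_def using assms by (intro integrableI_bounded_set_indicator[where B=B]) auto
  then show "G integrable_on S" and "integral S G = (LINT x:S|lborel. G x)"
    by (simp_all add: set_borel_integral_eq_integral)
qed

lemma radial_projection_bounded:
  fixes h :: "real^'n::finite \<Rightarrow> real"
  assumes "continuous_on UNIV h"
  obtains B where "\<And>x. \<bar>h (x /\<^sub>R norm x)\<bar> \<le> B"
proof -
  have "bounded (h ` cball 0 1)"
    by (intro compact_imp_bounded compact_continuous_image continuous_on_subset[OF assms]) auto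
  then obtain B where "\<forall>z\<in>h ` cball 0 1. norm z \<le> B"
    by (auto simp: bounded_iff)
  moreover have "x /\<^sub>R norm x \<in> cball 0 1" for x :: "real^'n"
    by (cases "x = 0") auto
  ultimately show ?thesis
    using that by fastforce
qed

lemma radial_projection_measurable:
  fixes h :: "real^'n::finite \<Rightarrow> real"
  assumes "continuous_on UNIV h"
  shows "(\<lambda>x. h (x /\<^sub>R norm x)) \<in> borel_measurable borel"
  using borel_measurable_continuous_onI[OF assms] by measurable

lemma sphere_avg_integrable:
  fixes h :: "real^'n::finite \<Rightarrow> real"
  assumes "continuous_on UNIV h"
  shows "(\<lambda>x. h (x /\<^sub>R norm x)) integrable_on ball 0 1"
proof -
  obtain B where "\<And>x. \<bar>h (x /\<^sub>R norm x)\<bar> \<le> B"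
    using radial_projection_bounded[OF assms] by blast
  then show ?thesis
    using radial_projection_measurable[OF assms] by (intro set_integral_bounded_eq_integral(1)) auto
qed

lemma sphere_avg_signed_perm:
  fixes h :: "real^'n::finite \<Rightarrow> real"
  assumes h: "continuous_on UNIV h" and p: "bij p" and s: "\<And>i. s i \<in> {-1, 1}"
  shows "sphere_avg (\<lambda>x. h (signed_perm p s x)) = sphere_avg h"
proof -
  define G where "G x = h (x /\<^sub>R norm x)" for x :: "real^'n"
  obtain B where B: "\<And>x. \<bar>G x\<bar> \<le> B"
    using radial_projection_bounded[OF h] G_def by metis
  have G: "G \<in> borel_measurable borel"
    using radial_projection_measurable[OF h] by (simp add: G_def[abs_def])
  have "integral (ball 0 1) (\<lambda>x. G (signed_perm p s x)) = (LINT x:ball 0 1|lborel. G (signed_perm p s x))"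
    using B G by (intro set_integral_bounded_eq_integral(2)) auto
  also have "\<dots> = (\<integral>x. indicator (ball 0 1) (signed_perm p s x) *\<^sub>R G (signed_perm p s x) \<partial>lborel)"
    by (simp add: set_lebesgue_integral_def indicator_def norm_signed_perm[OF p s])
  also have "\<dots> = (LINT x:ball 0 1|lborel. G x)"
    unfolding set_lebesgue_integral_def using G
    by (intro lborel_integral_signed_perm[OF p s] borel_measurable_scaleR borel_measurable_indicator) auto
  also have "\<dots> = integral (ball 0 1) G"
    using B G by (intro set_integral_bounded_eq_integral(2)[symmetric]) auto
  finally show ?thesis
    by (simp add: sphere_avg_def G_def[abs_def] signed_perm_scaleR norm_signed_perm[OF p s])
qed

lemma sphere_avg_sum:
  fixes h :: "'a \<Rightarrow> real^'n::finite \<Rightarrow> real"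
  assumes "finite F" and "\<And>a. a \<in> F \<Longrightarrow> continuous_on UNIV (h a)"
  shows "sphere_avg (\<lambda>x. \<Sum>a\<in>F. c a * h a x) = (\<Sum>a\<in>F. c a * sphere_avg (h a))"
proof -
  have "integral (ball 0 1) (\<lambda>x. \<Sum>a\<in>F. c a * h a (x /\<^sub>R norm x))
      = (\<Sum>a\<in>F. c a * integral (ball 0 1) (\<lambda>x. h a (x /\<^sub>R norm x)))"
    using assms by (subst integral_sum) (auto intro!: integrable_on_mult_right[OF sphere_avg_integrable])
  then show ?thesis
    by (simp add: sphere_avg_def sum_divide_distrib)
qed

lemma sphere_avg_one: "sphere_avg (\<lambda>x::real^'n::finite. 1) = 1"
proof -
  have "measure lebesgue (ball (0::real^'n) 1) > 0"
    using content_ball_pos[of 1 "0::real^'n"] by simp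
  then show ?thesis
    by (simp add: sphere_avg_def lmeasure_integral[symmetric])
qed

lemma sphere_avg_sum_component_sq: "(\<Sum>i\<in>UNIV. sphere_avg (\<lambda>x::real^'n::finite. (x $ i)^2)) = 1"
proof -
  have "(\<Sum>i\<in>UNIV. sphere_avg (\<lambda>x::real^'n. (x $ i)^2)) = sphere_avg (\<lambda>x::real^'n. \<Sum>i\<in>UNIV. 1 * (x $ i)^2)"
    by (subst sphere_avg_sum) (auto intro!: continuous_intros)
  also have "\<dots> = sphere_avg (\<lambda>x::real^'n. 1)"
    unfolding sphere_avg_def
  proof (intro arg_cong2[where f="(/)"] integral_spike[of "{0}"])
    fix x :: "real^'n"
    assume "x \<in> ball 0 1 - {0}"
    then have "(x /\<^sub>R norm x) \<bullet> (x /\<^sub>R norm x) = 1"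
      by (simp add: dot_square_norm)
    then show "1 = (\<Sum>i\<in>UNIV. 1 * ((x /\<^sub>R norm x) $ i)^2)"
      by (simp add: inner_vec_def power2_eq_square)
  qed auto
  also have "\<dots> = 1"
    by (rule sphere_avg_one)
  finally show ?thesis .
qed

lemma sphere_avg_component_sq:
  fixes i :: "'n::finite"
  shows "sphere_avg (\<lambda>x::real^'n. (x $ i)^2) = 1 / real CARD('n)"
proof -
  have swap: "sphere_avg (\<lambda>x::real^'n. (x $ j)^2) = sphere_avg (\<lambda>x::real^'n. (x $ i)^2)" for j
  proof -
    have "continuous_on UNIV (\<lambda>x::real^'n. (x $ i)^2)"
      by (intro continuous_intros)
    moreover have "bij (Transposition.transpose i j)"
      by (simp add: bij_swap_iff)
    ultimately have "sphere_avg (\<lambda>x::real^'n. (signed_perm (Transposition.transpose i j) (\<lambda>_. 1) x $ i)^2)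
        = sphere_avg (\<lambda>x. (x $ i)^2)"
      by (rule sphere_avg_signed_perm) simp
    then show ?thesis
      by (simp only: signed_perm_def vec_lambda_beta transpose_apply_first mult_1)
  qed
  have "(\<Sum>j\<in>UNIV. sphere_avg (\<lambda>x::real^'n. (x $ j)^2)) = (\<Sum>j\<in>(UNIV::'n set). sphere_avg (\<lambda>x::real^'n. (x $ i)^2))"
    by (intro sum.cong refl) (rule swap)
  also have "\<dots> = real CARD('n) * sphere_avg (\<lambda>x::real^'n. (x $ i)^2)"
    by simp
  finally show ?thesis
    using sphere_avg_sum_component_sq[where 'n='n] by (simp add: eq_divide_eq mult.commute)
qed

section \<open>Monomials and the moments of low degree\<close>

definition monomial :: "('n::finite \<Rightarrow> nat) \<Rightarrow> real^'n \<Rightarrow> real" where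
  "monomial a x = (\<Prod>i\<in>UNIV. (x $ i) ^ a i)"

lemma continuous_on_monomial: "continuous_on UNIV (monomial a)"
  unfolding monomial_def by (intro continuous_intros)

lemma monomial_zero [simp]: "monomial (\<lambda>_. 0) = (\<lambda>x. 1)"
  by (simp add: monomial_def fun_eq_iff)

lemma monomial_single: "monomial (\<lambda>j. if j = i then k else 0) = (\<lambda>x. (x $ i) ^ k)"
  unfolding monomial_def by (simp add: fun_eq_iff if_distrib prod.If_cases)

lemma poly_fun_deg_monomial:
  assumes "sum a UNIV \<le> t"
  shows "poly_fun_deg t (monomial a)"
  unfolding poly_fun_deg_def
  by (rule exI[of _ "{a}"], rule exI[of _ "\<lambda>_. 1"]) (use assms in \<open>simp add: monomial_def fun_eq_iff\<close>)

lemma sph_design_iff_monomials: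
  "sph_design t n X \<longleftrightarrow> (\<forall>j<n. norm (X j) = 1) \<and>
     (\<forall>a. sum a UNIV \<le> t \<longrightarrow> sphere_avg (monomial a) = (\<Sum>j<n. monomial a (X j)) / real n)"
proof -
  have "sphere_avg f = (\<Sum>j<n. f (X j)) / real n"
    if monomials: "\<forall>a. sum a UNIV \<le> t \<longrightarrow> sphere_avg (monomial a) = (\<Sum>j<n. monomial a (X j)) / real n"
      and "poly_fun_deg t f" for f
  proof -
    obtain F c where F: "finite F" "\<And>a. a \<in> F \<Longrightarrow> sum a UNIV \<le> t"
      and f: "f = (\<lambda>x. \<Sum>a\<in>F. c a * monomial a x)"
      using \<open>poly_fun_deg t f\<close> unfolding poly_fun_deg_def monomial_def by blast
    have "sphere_avg f = (\<Sum>a\<in>F. c a * sphere_avg (monomial a))"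
      unfolding f using F(1) continuous_on_monomial by (rule sphere_avg_sum)
    also have "\<dots> = (\<Sum>a\<in>F. c a * ((\<Sum>j<n. monomial a (X j)) / real n))"
      using F(2) monomials by simp
    also have "\<dots> = (\<Sum>j<n. f (X j)) / real n"
      unfolding f by (simp add: sum_divide_distrib sum_distrib_left sum.swap[of _ F] mult_ac)
    finally show ?thesis .
  qed
  then show ?thesis
    unfolding sph_design_def using poly_fun_deg_monomial by blast
qed

lemma sphere_avg_monomial_odd:
  assumes "odd (a i)"
  shows "sphere_avg (monomial a) = 0"
proof -
  define s where "s k = (if k = i then -1 else 1::real)" for k
  have "(\<Prod>k\<in>UNIV. s k ^ a k) = (\<Prod>k\<in>UNIV. if k = i then (-1) ^ a i else 1)"
    by (intro prod.cong) (auto simp: s_def)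
  also have "\<dots> = -1"
    using assms by simp
  finally have "monomial a (signed_perm id s x) = - monomial a x" for x
    by (simp add: monomial_def signed_perm_def power_mult_distrib prod.distrib)
  then have "sphere_avg (\<lambda>x. - monomial a x) = sphere_avg (monomial a)"
    using sphere_avg_signed_perm[OF continuous_on_monomial bij_id, of s a] by (simp add: s_def)
  then show ?thesis
    by (simp add: sphere_avg_def)
qed

(* Agrees with the sphere average of monomial a only up to degree 3 (sphere_avg_monomial);
   higher even moments carry further factors. *)
definition sphere_moment :: "('n::finite \<Rightarrow> nat) \<Rightarrow> real" where
  "sphere_moment a = (if \<forall>i. even (a i) then (1 / real CARD('n)) ^ (sum a UNIV div 2) else 0)"

lemma even_exponents_degree_le3:
  fixes a :: "'n::finite \<Rightarrow> nat"
  assumes even: "\<forall>i. even (a i)" and deg: "sum a UNIV \<le> 3"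
  obtains "a = (\<lambda>_. 0)" | i where "a = (\<lambda>j. if j = i then 2 else 0)"
proof (cases "a = (\<lambda>_. 0)")
  case False
  then obtain i where "a i \<noteq> 0"
    by auto
  moreover have "a i \<le> 3"
    using member_le_sum[of i UNIV a] deg by simp
  ultimately have ai: "a i = 2"
    using even[rule_format, of i] by presburger
  have "a j = 0" if "j \<noteq> i" for j
  proof -
    have "a i + a j \<le> sum a UNIV"
      using that by (simp add: sum.remove[of UNIV i] member_le_sum)
    then show ?thesis
      using even[rule_format, of j] ai deg by presburger
  qed
  then have "a = (\<lambda>j. if j = i then 2 else 0)"
    using ai by auto
  then show ?thesis
    using that by blast
qed

lemma sphere_avg_monomial:
  fixes a :: "'n::finite \<Rightarrow> nat"
  assumes "sum a UNIV \<le> 3"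
  shows "sphere_avg (monomial a) = sphere_moment a"
proof (cases "\<forall>i. even (a i)")
  case True
  from True assms show ?thesis
  proof (cases rule: even_exponents_degree_le3)
    case 1
    then show ?thesis
      by (simp add: sphere_moment_def sphere_avg_one)
  next
    case (2 i)
    then show ?thesis
      by (simp add: sphere_moment_def monomial_single sphere_avg_component_sq)
  qed
next
  case False
  then obtain i where "odd (a i)"
    by blast
  then show ?thesis
    using False by (simp add: sphere_moment_def sphere_avg_monomial_odd[of a i])
qed

lemma sphere_moment_odd_degree:
  assumes "odd (sum a UNIV)"
  shows "sphere_moment a = 0"
proof -
  have "\<not> (\<forall>i. even (a i))"
    using assms dvd_sum[of UNIV 2 a] by auto
  then show ?thesis
    by (simp add: sphere_moment_def)
qed

section \<open>Lifting a design antipodally\<close>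

definition antipodal_double :: "nat \<Rightarrow> (nat \<Rightarrow> 'a::uminus) \<Rightarrow> nat \<Rightarrow> 'a" where
  "antipodal_double n Y j = (if j < n then Y j else - Y (j - n))"

lemma sum_lessThan_double: "(\<Sum>j<2 * n. f j) = (\<Sum>j<n. f j) + (\<Sum>j<n. f (j + n))" for n :: nat
proof -
  have "(\<Sum>j<2 * n. f j) = sum f {0..<n} + sum f {n..<n + n}"
    by (simp add: sum.atLeastLessThan_concat lessThan_atLeast0 mult_2)
  also have "sum f {n..<n + n} = (\<Sum>j<n. f (j + n))"
    using sum.shift_bounds_nat_ivl[of f 0 n n] by (simp add: lessThan_atLeast0)
  finally show ?thesis
    by (simp add: lessThan_atLeast0)
qed

lemma monomial_uminus: "monomial a (- x) = (-1) ^ sum a UNIV * monomial a x"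
proof -
  have "monomial a (- x) = (\<Prod>i\<in>UNIV. (-1) ^ a i * (x $ i) ^ a i)"
    unfolding monomial_def by (intro prod.cong refl) (simp only: vector_uminus_component, rule power_minus)
  also have "\<dots> = (-1) ^ sum a UNIV * monomial a x"
    by (simp only: prod.distrib monomial_def power_sum)
  finally show ?thesis .
qed

lemma sum_monomial_antipodal_double:
  "(\<Sum>j<2 * n. monomial a (antipodal_double n Y j)) = (1 + (-1) ^ sum a UNIV) * (\<Sum>j<n. monomial a (Y j))"
  unfolding sum_lessThan_double
  by (simp add: antipodal_double_def monomial_uminus sum_distrib_left sum.distrib algebra_simps)

lemma sum_UNIV_option: "(\<Sum>i\<in>UNIV. f i) = f None + (\<Sum>k\<in>UNIV. f (Some k))"
  for f :: "'a::finite option \<Rightarrow> 'b::comm_monoid_add"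
  by (simp add: UNIV_option_conv sum.reindex)

lemma prod_UNIV_option: "(\<Prod>i\<in>UNIV. f i) = f None * (\<Prod>k\<in>UNIV. f (Some k))"
  for f :: "'a::finite option \<Rightarrow> 'b::comm_monoid_mult"
  by (simp add: UNIV_option_conv prod.reindex)

definition lift_point :: "real \<Rightarrow> real \<Rightarrow> real^'n \<Rightarrow> real^'n option" where
  "lift_point \<alpha> \<delta> v = (\<chi> i. case i of Some k \<Rightarrow> \<alpha> * v $ k | None \<Rightarrow> \<delta>)"

lemma norm_lift_point:
  assumes "norm v = 1" and "\<alpha>^2 + \<delta>^2 = 1"
  shows "norm (lift_point \<alpha> \<delta> v) = 1"
proof -
  have "lift_point \<alpha> \<delta> v \<bullet> lift_point \<alpha> \<delta> v = \<delta>^2 + \<alpha>^2 * (v \<bullet> v)"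
    by (simp add: lift_point_def inner_vec_def sum_UNIV_option sum_distrib_left power2_eq_square mult_ac)
  also have "\<dots> = 1"
    using assms by (simp add: dot_square_norm)
  finally show ?thesis
    by (simp add: norm_eq_sqrt_inner)
qed

lemma monomial_lift_point:
  "monomial a (lift_point \<alpha> \<delta> v) = \<delta> ^ a None * \<alpha> ^ (\<Sum>k\<in>UNIV. a (Some k)) * monomial (\<lambda>k. a (Some k)) v"
proof -
  have "monomial a (lift_point \<alpha> \<delta> v) = \<delta> ^ a None * (\<Prod>k\<in>UNIV. \<alpha> ^ a (Some k) * (v $ k) ^ a (Some k))"
    by (simp add: monomial_def lift_point_def prod_UNIV_option power_mult_distrib)
  then show ?thesis
    by (simp only: prod.distrib power_sum monomial_def mult.assoc)
qed

lemma sphere_moment_lift_point: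
  fixes a :: "'n::finite option \<Rightarrow> nat"
  assumes \<alpha>: "\<alpha>^2 = real CARD('n) / (real CARD('n) + 1)"
    and \<delta>: "\<delta>^2 = 1 / (real CARD('n) + 1)"
    and even_deg: "even (sum a UNIV)"
  shows "\<delta> ^ a None * \<alpha> ^ (\<Sum>k\<in>UNIV. a (Some k)) * sphere_moment (\<lambda>k. a (Some k)) = sphere_moment a"
proof (cases "\<forall>k. even (a (Some k))")
  case True
  define b where "b = (\<lambda>k. a (Some k))"
  define d where "d = real CARD('n)"
  have deg: "sum a UNIV = a None + sum b UNIV"
    unfolding b_def by (rule sum_UNIV_option)
  have "even (sum b UNIV)"
    using True by (simp add: b_def dvd_sum)
  then have "even (a None)"
    using even_deg deg by simp
  then have "\<forall>i. even (a i)"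
    using True by (metis option.exhaust)
  have even_power: "x ^ m = (x^2) ^ (m div 2)" if "even m" for x :: real and m
    using that by (simp flip: power_mult)
  have "\<alpha>^2 * (1 / d) = 1 / (d + 1)"
    using \<alpha> by (simp add: d_def)
  then have "\<delta> ^ a None * \<alpha> ^ sum b UNIV * (1 / d) ^ (sum b UNIV div 2)
      = (1 / (d + 1)) ^ (a None div 2) * (1 / (d + 1)) ^ (sum b UNIV div 2)"
    using \<open>even (a None)\<close> \<open>even (sum b UNIV)\<close> \<delta>
    by (simp add: even_power[of "a None"] even_power[of "sum b UNIV"] d_def mult.assoc
        flip: power_mult_distrib)
  also have "\<dots> = (1 / (d + 1)) ^ (sum a UNIV div 2)"
    using \<open>even (a None)\<close> \<open>even (sum b UNIV)\<close>
    by (simp add: deg power_add[symmetric] div_plus_div_distrib_dvd_left)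
  finally show ?thesis
    using True \<open>\<forall>i. even (a i)\<close>
    by (simp add: sphere_moment_def b_def d_def card_UNIV_option add.commute)
next
  case False
  then show ?thesis
    by (auto simp: sphere_moment_def)
qed

lemma sph_design_antipodal_lift:
  fixes A :: "nat \<Rightarrow> real^'d::finite"
  assumes design: "sph_design 2 n A"
    and \<alpha>: "\<alpha>^2 = real CARD('d) / (real CARD('d) + 1)"
    and \<delta>: "\<delta>^2 = 1 / (real CARD('d) + 1)"
  shows "sph_design 3 (2 * n) (antipodal_double n (\<lambda>j. lift_point \<alpha> \<delta> (A j)))"
  unfolding sph_design_iff_monomials
proof (intro conjI allI impI)
  have unit: "norm (A j) = 1" if "j < n" for j
    using design that unfolding sph_design_def by blast
  have moments: "(\<Sum>j<n. monomial b (A j)) / real n = sphere_moment b" if "sum b UNIV \<le> 2" for b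
    using design that unfolding sph_design_iff_monomials by (simp add: sphere_avg_monomial)
  have "\<alpha>^2 + \<delta>^2 = 1"
    unfolding \<alpha> \<delta> by (simp add: field_simps)
  then show "norm (antipodal_double n (\<lambda>j. lift_point \<alpha> \<delta> (A j)) j) = 1" if "j < 2 * n" for j
    using that by (auto simp: antipodal_double_def intro!: norm_lift_point unit)
  fix a :: "'d option \<Rightarrow> nat"
  assume deg: "sum a UNIV \<le> 3"
  define b where "b = (\<lambda>k. a (Some k))"
  have deg_split: "sum a UNIV = a None + sum b UNIV"
    unfolding b_def by (rule sum_UNIV_option)
  have "(\<Sum>j<n. monomial a (lift_point \<alpha> \<delta> (A j))) = \<delta> ^ a None * \<alpha> ^ sum b UNIV * (\<Sum>j<n. monomial b (A j))"
    by (simp add: monomial_lift_point b_def sum_distrib_left)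
  then have avg: "(\<Sum>j<2 * n. monomial a (antipodal_double n (\<lambda>j. lift_point \<alpha> \<delta> (A j)) j)) / real (2 * n)
      = (1 + (-1) ^ sum a UNIV) / 2 * (\<delta> ^ a None * \<alpha> ^ sum b UNIV * ((\<Sum>j<n. monomial b (A j)) / real n))"
    by (simp add: sum_monomial_antipodal_double)
  show "sphere_avg (monomial a)
      = (\<Sum>j<2 * n. monomial a (antipodal_double n (\<lambda>j. lift_point \<alpha> \<delta> (A j)) j)) / real (2 * n)"
  proof (cases "even (sum a UNIV)")
    case True
    then have "sum a UNIV \<noteq> 3"
      by auto
    then have "sum b UNIV \<le> 2"
      using deg deg_split by linarith
    then show ?thesis
      unfolding avg sphere_avg_monomial[OF deg]
      using True moments sphere_moment_lift_point[OF \<alpha> \<delta> True] by (simp add: b_def)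
  next
    case False
    then show ?thesis
      unfolding avg sphere_avg_monomial[OF deg] by (simp add: sphere_moment_odd_degree)
  qed
qed

theorem mainTheorem4:
  fixes A :: "nat \<Rightarrow> real^'d" and n1 :: nat
  assumes "sph_design 2 n1 A"
  shows "sph_design 3 (2 * n1)
           (\<lambda>j. \<chi> i :: 'd option.
              (case i of
                 Some k \<Rightarrow> (if j < n1 then sqrt (real CARD('d) / (real CARD('d) + 1)) * (A j $ k)
                            else - sqrt (real CARD('d) / (real CARD('d) + 1)) * (A (j - n1) $ k))
               | None \<Rightarrow> (if j < n1 then sqrt (1 / (real CARD('d) + 1))
                          else - sqrt (1 / (real CARD('d) + 1)))))"
proof -
  define \<alpha> where "\<alpha> = sqrt (real CARD('d) / (real CARD('d) + 1))"
  define \<delta> where "\<delta> = sqrt (1 / (real CARD('d) + 1))"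
  have "sph_design 3 (2 * n1) (antipodal_double n1 (\<lambda>j. lift_point \<alpha> \<delta> (A j)))"
    using assms by (rule sph_design_antipodal_lift) (simp_all add: \<alpha>_def \<delta>_def)
  also have "antipodal_double n1 (\<lambda>j. lift_point \<alpha> \<delta> (A j))
      = (\<lambda>j. \<chi> i. case i of
                 Some k \<Rightarrow> (if j < n1 then \<alpha> * (A j $ k) else - \<alpha> * (A (j - n1) $ k))
               | None \<Rightarrow> (if j < n1 then \<delta> else - \<delta>))"
    by (auto simp: fun_eq_iff vec_eq_iff antipodal_double_def lift_point_def split: option.split)
  finally show ?thesis
    unfolding \<alpha>_def \<delta>_def .
qed

end
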